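(* Let $K=\operatorname{cone}\{e_1,\dots,e_m\}\subset\mathbb{R}^m$ be a simplicial cone, and suppose there are pairwise distinct indices $i,j,k\in\{1,\dots,m\}$ with $\langle e_i,e_j\rangle<0$, $\langle e_i,e_k\rangle<0$ and $\langle e_j,e_k\rangle<0$. Then there is no proper cone $L$ such that $K$ is an $L$-isotone projection set.
   Context: $\mathbb{R}^m$ carries the standard inner product. A simplicial cone is $\operatorname{cone}\{e_1,\dots,e_m\}=\{\sum t^ie_i:t^i\ge0\}$ with $e_1,\dots,e_m$ linearly independent. A proper cone is a closed convex cone $L$ that is pointed and generating ($L-L=\mathbb{R}^m$). $x\le_L y$ means $y-x\in L$. $K$ is an $L$-isotone projection set if $x\le_L y$ implies $P_Kx\le_L P_Ky$, where $P_K$ is the metric projection onto $K$. *)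

theory Defs
  imports "HOL-Analysis.Analysis"
begin

definition gen_cone :: "('m::finite \<Rightarrow> 'a::real_vector) \<Rightarrow> 'a set" where
  "gen_cone e = {(\<Sum>i\<in>UNIV. t i *\<^sub>R e i) | t. \<forall>i. t i \<ge> 0}"

definition simplicial_generators :: "('m::finite \<Rightarrow> real^'m) \<Rightarrow> bool" where
  "simplicial_generators e \<longleftrightarrow> inj e \<and> independent (range e)"

definition proper_cone :: "'a::real_normed_vector set \<Rightarrow> bool" where
  "proper_cone L \<longleftrightarrow> closed L \<and> convex L \<and> cone L \<and>
     L \<inter> uminus ` L = {0} \<and> {x - y | x y. x \<in> L \<and> y \<in> L} = UNIV"

definition cone_le :: "'a::real_vector set \<Rightarrow> 'a \<Rightarrow> 'a \<Rightarrow> bool" where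
  "cone_le L x y \<longleftrightarrow> y - x \<in> L"

definition isotone_projection_set :: "'a::euclidean_space set \<Rightarrow> 'a set \<Rightarrow> bool" where
  "isotone_projection_set L K \<longleftrightarrow>
     (\<forall>x y. cone_le L x y \<longrightarrow> cone_le L (closest_point K x) (closest_point K y))"

end

theory Submission
  imports Defs
begin

text \<open>
  Fix a generator e_i and a vector v in L. For a suitable w, the point e_i + w projects onto e_i,
  and every small perturbation e_i + w + s v projects onto (1 + s (v \<bullet> e_i) / |e_i|^2) e_i.
  Isotonicity therefore puts (v \<bullet> e_i) e_i into L. As L is generating, some v in L has
  v \<bullet> e_i \<noteq> 0, and as L is pointed, the sign of v \<bullet> e_i cannot change over L: so there is
  a sign \<sigma>_i with \<sigma>_i e_i in L and in the dual cone of L. For an obtuse pair e_a, e_b this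
  forces \<sigma>_a = - \<sigma>_b, which is impossible for three pairwise obtuse generators.
\<close>

lemma closest_point_eq_if_inner_nonpos:
  fixes S :: "'a::{real_inner,heine_borel} set"
  assumes "p \<in> S" and obtuse: "\<And>z. z \<in> S \<Longrightarrow> (a - p) \<bullet> (z - p) \<le> 0"
  shows "closest_point S a = p"
proof -
  have closer: "dist a p < dist a z" if "z \<in> S" "z \<noteq> p" for z
  proof -
    have "(dist a z)\<^sup>2 = (norm ((a - p) - (z - p)))\<^sup>2" by (simp add: dist_norm)
    also have "\<dots> = (dist a p)\<^sup>2 + (norm (z - p))\<^sup>2 - 2 * ((a - p) \<bullet> (z - p))"
      by (simp add: power2_norm_eq_inner dist_norm inner_diff_left inner_diff_right
          inner_commute algebra_simps)
    finally have "(dist a z)\<^sup>2 = (dist a p)\<^sup>2 + (norm (z - p))\<^sup>2 - 2 * ((a - p) \<bullet> (z - p))" .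
    moreover have "norm (z - p) > 0" using \<open>z \<noteq> p\<close> by simp
    ultimately have "(dist a p)\<^sup>2 < (dist a z)\<^sup>2" using obtuse[OF \<open>z \<in> S\<close>]
      by (smt (verit) zero_less_power)
    thus ?thesis by (simp add: power_less_imp_less_base)
  qed
  show ?thesis
    unfolding closest_point_def
  proof (rule some_equality)
    show "p \<in> S \<and> (\<forall>z\<in>S. dist a p \<le> dist a z)"
      using \<open>p \<in> S\<close> closer by (metis order.order_iff_strict)
  next
    show "x = p" if "x \<in> S \<and> (\<forall>z\<in>S. dist a x \<le> dist a z)" for x
      using that \<open>p \<in> S\<close> closer by (metis not_less)
  qed
qed

lemma scaleR_generator_in_gen_cone:
  fixes e :: "'m::finite \<Rightarrow> 'a::real_vector"
  assumes "t \<ge> 0"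
  shows "t *\<^sub>R e i \<in> gen_cone e"
proof -
  have "(\<Sum>l\<in>UNIV. (if l = i then t else 0) *\<^sub>R e l) = t *\<^sub>R e i"
    by (simp add: sum.delta if_distrib[of "\<lambda>c. c *\<^sub>R e _"] cong: if_cong)
  thus ?thesis
    unfolding gen_cone_def using assms
    by (intro CollectI exI[of _ "\<lambda>l. if l = i then t else 0"]) auto
qed

lemma inner_gen_cone_nonpos:
  fixes e :: "'m::finite \<Rightarrow> 'a::real_inner"
  assumes "\<And>l. w \<bullet> e l \<le> 0" and "z \<in> gen_cone e"
  shows "w \<bullet> z \<le> 0"
proof -
  obtain c where z: "z = (\<Sum>l\<in>UNIV. c l *\<^sub>R e l)" and c: "\<And>l. c l \<ge> 0"
    using \<open>z \<in> gen_cone e\<close> unfolding gen_cone_def by blast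
  have "w \<bullet> z = (\<Sum>l\<in>UNIV. c l * (w \<bullet> e l))"
    unfolding z by (simp add: inner_sum_right)
  also have "\<dots> \<le> 0"
    by (rule sum_nonpos) (simp add: c assms(1) mult_nonneg_nonpos)
  finally show ?thesis .
qed

lemma closest_point_gen_cone_ray:
  fixes e :: "'m::finite \<Rightarrow> 'a::{real_inner,heine_borel}"
  assumes "t \<ge> 0" and "(a - t *\<^sub>R e i) \<bullet> e i = 0" and "\<And>l. (a - t *\<^sub>R e i) \<bullet> e l \<le> 0"
  shows "closest_point (gen_cone e) a = t *\<^sub>R e i"
proof (rule closest_point_eq_if_inner_nonpos)
  show "t *\<^sub>R e i \<in> gen_cone e" using assms(1) by (rule scaleR_generator_in_gen_cone)
  show "(a - t *\<^sub>R e i) \<bullet> (z - t *\<^sub>R e i) \<le> 0" if "z \<in> gen_cone e" for z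
    using inner_gen_cone_nonpos[OF assms(3) that] assms(2) by (simp add: inner_diff_right)
qed

lemma ex_inner_eq_on_simplicial_generators:
  fixes e :: "'m::finite \<Rightarrow> real^'m"
  assumes "simplicial_generators e"
  shows "\<exists>x. \<forall>l. x \<bullet> e l = f l"
proof -
  have "inj e" and ind: "independent (range e)"
    using assms unfolding simplicial_generators_def by auto
  hence "card (range e) = CARD('m)" by (simp add: card_image)
  hence "span (range e) = UNIV"
    using card_ge_dim_independent[of "range e" UNIV] by (auto simp: ind dim_UNIV)
  define g where "g x = (\<chi> l. x \<bullet> e l)" for x :: "real^'m"
  have lin: "linear g" unfolding g_def
    by (rule linearI) (auto simp: vec_eq_iff inner_add_left)
  have "inj g"
    unfolding linear_injective_0[OF lin]
  proof (intro allI impI)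
    fix x assume "g x = 0"
    hence "orthogonal x x"
      using orthogonal_to_span[of x "range e" x] \<open>span (range e) = UNIV\<close>
      by (auto simp: g_def vec_eq_iff orthogonal_def)
    thus "x = 0" by (simp add: orthogonal_def)
  qed
  then obtain x where "g x = (\<chi> l. f l)"
    using linear_injective_imp_surjective[OF lin] by (metis surjD)
  thus ?thesis unfolding g_def by (auto simp: vec_eq_iff)
qed

lemma simplicial_generator_nonzero:
  assumes "simplicial_generators e"
  shows "e i \<noteq> 0"
  using assms dependent_zero[of "range e"] unfolding simplicial_generators_def by auto

lemma ex_pos_mult_le_one:
  fixes A :: "real set"
  assumes "finite A"
  shows "\<exists>s>0. \<forall>a\<in>A. s * a \<le> 1"
proof (intro exI conjI ballI)
  let ?M = "1 + (\<Sum>a\<in>A. \<bar>a\<bar>)"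
  have "0 \<le> (\<Sum>a\<in>A. \<bar>a\<bar>)" by (simp add: sum_nonneg)
  hence M: "?M > 0" by linarith
  thus "1 / ?M > 0" by simp
  fix a assume "a \<in> A"
  hence "a \<le> ?M" using member_le_sum[of a A abs] assms by fastforce
  thus "1 / ?M * a \<le> 1" using M by simp
qed

lemma cone_sgn_scaleR:
  assumes "cone L" "c *\<^sub>R x \<in> L"
  shows "sgn c *\<^sub>R x \<in> L"
  using mem_cone[OF assms, of "1 / \<bar>c\<bar>"] by (simp add: real_sgn_eq)

lemma isotone_projection_scaleR_generator_in_cone:
  fixes e :: "'m::finite \<Rightarrow> real^'m"
  assumes sg: "simplicial_generators e" and "cone L"
    and iso: "isotone_projection_set L (gen_cone e)" and "v \<in> L"
  shows "(v \<bullet> e i) *\<^sub>R e i \<in> L"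
proof -
  define n where "n = e i \<bullet> e i"
  have "n > 0" unfolding n_def using simplicial_generator_nonzero[OF sg] by simp
  obtain w where w: "\<And>l. w \<bullet> e l = (if l = i then 0 else -1)"
    using ex_inner_eq_on_simplicial_generators[OF sg, of "\<lambda>l. if l = i then 0 else -1"] by blast
  define u where "u = v - (v \<bullet> e i / n) *\<^sub>R e i"
  have proj: "closest_point (gen_cone e) (e i + w + s *\<^sub>R v) = (1 + s * (v \<bullet> e i) / n) *\<^sub>R e i"
    if "s \<ge> 0" "s * (- (v \<bullet> e i) / n) \<le> 1" "\<And>l. s * (u \<bullet> e l) \<le> 1" for s
  proof (rule closest_point_gen_cone_ray)
    have residual: "e i + w + s *\<^sub>R v - (1 + s * (v \<bullet> e i) / n) *\<^sub>R e i = w + s *\<^sub>R u"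
      unfolding u_def by (simp add: algebra_simps)
    show "0 \<le> 1 + s * (v \<bullet> e i) / n" using that(2) by simp
    show "(e i + w + s *\<^sub>R v - (1 + s * (v \<bullet> e i) / n) *\<^sub>R e i) \<bullet> e i = 0"
      unfolding residual using \<open>n > 0\<close> w[of i] by (simp add: u_def inner_add_left inner_diff_left n_def)
    show "(e i + w + s *\<^sub>R v - (1 + s * (v \<bullet> e i) / n) *\<^sub>R e i) \<bullet> e l \<le> 0" for l
      unfolding residual using \<open>n > 0\<close> w[of l] that(3)[of l]
      by (cases "l = i") (simp_all add: u_def inner_add_left inner_diff_left n_def)
  qed
  obtain s where "s > 0"
    and small: "\<forall>a\<in>insert (- (v \<bullet> e i) / n) (range (\<lambda>l. u \<bullet> e l)). s * a \<le> 1"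
    using ex_pos_mult_le_one[of "insert (- (v \<bullet> e i) / n) (range (\<lambda>l. u \<bullet> e l))"] by auto
  have "cone_le L (e i + w) (e i + w + s *\<^sub>R v)"
    unfolding cone_le_def using mem_cone[OF \<open>cone L\<close> \<open>v \<in> L\<close>, of s] \<open>s > 0\<close> by simp
  hence "closest_point (gen_cone e) (e i + w + s *\<^sub>R v) - closest_point (gen_cone e) (e i + w) \<in> L"
    using iso unfolding isotone_projection_set_def cone_le_def by blast
  also have "closest_point (gen_cone e) (e i + w) = 1 *\<^sub>R e i"
    using proj[of 0] by simp
  also have "closest_point (gen_cone e) (e i + w + s *\<^sub>R v) = (1 + s * (v \<bullet> e i) / n) *\<^sub>R e i"
    using proj[of s] \<open>s > 0\<close> small by auto
  finally have "(s / n) *\<^sub>R ((v \<bullet> e i) *\<^sub>R e i) \<in> L" by (simp add: algebra_simps)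
  from mem_cone[OF \<open>cone L\<close> this, of "n / s"] show ?thesis
    using \<open>n > 0\<close> \<open>s > 0\<close> by simp
qed

lemma signed_generator_in_cone_and_dual:
  fixes e :: "'m::finite \<Rightarrow> real^'m"
  assumes sg: "simplicial_generators e" and "proper_cone L"
    and iso: "isotone_projection_set L (gen_cone e)"
  shows "\<exists>\<sigma>\<in>{-1, 1}. \<sigma> *\<^sub>R e i \<in> L \<and> (\<forall>v\<in>L. 0 \<le> v \<bullet> (\<sigma> *\<^sub>R e i))"
proof -
  have "cone L" and pointed: "L \<inter> uminus ` L = {0}"
    and generating: "{x - y | x y. x \<in> L \<and> y \<in> L} = UNIV"
    using \<open>proper_cone L\<close> unfolding proper_cone_def by auto
  have "e i \<noteq> 0" using sg by (rule simplicial_generator_nonzero)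
  have sgn_in_cone: "sgn (v \<bullet> e i) *\<^sub>R e i \<in> L" if "v \<in> L" for v
    using isotone_projection_scaleR_generator_in_cone[OF sg \<open>cone L\<close> iso that]
    by (rule cone_sgn_scaleR[OF \<open>cone L\<close>])
  obtain x y where "x \<in> L" "y \<in> L" "e i = x - y"
    using generating by blast
  moreover have "(x - y) \<bullet> e i \<noteq> 0"
    using \<open>e i = x - y\<close> \<open>e i \<noteq> 0\<close> by auto
  ultimately obtain v where "v \<in> L" "v \<bullet> e i \<noteq> 0"
    by (metis diff_zero inner_diff_left)
  define \<sigma> where "\<sigma> = sgn (v \<bullet> e i)"
  have "\<sigma> \<in> {-1, 1}" using \<open>v \<bullet> e i \<noteq> 0\<close> by (auto simp: \<sigma>_def sgn_real_def)
  moreover have "\<sigma> *\<^sub>R e i \<in> L" unfolding \<sigma>_def using \<open>v \<in> L\<close> by (rule sgn_in_cone)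
  moreover have "0 \<le> u \<bullet> (\<sigma> *\<^sub>R e i)" if "u \<in> L" for u
  proof (rule ccontr)
    assume "\<not> 0 \<le> u \<bullet> (\<sigma> *\<^sub>R e i)"
    hence "sgn (u \<bullet> e i) = - \<sigma>" using \<open>\<sigma> \<in> {-1, 1}\<close> by (auto simp: sgn_real_def)
    hence "- (\<sigma> *\<^sub>R e i) \<in> L" using sgn_in_cone[OF that] by simp
    hence "\<sigma> *\<^sub>R e i \<in> L \<inter> uminus ` L"
      using \<open>\<sigma> *\<^sub>R e i \<in> L\<close> by (metis IntI image_eqI minus_minus)
    thus False using pointed \<open>e i \<noteq> 0\<close> \<open>\<sigma> \<in> {-1, 1}\<close> by auto
  qed
  ultimately show ?thesis by blast
qed

theorem corollary2:
  fixes e :: "'m::finite \<Rightarrow> real^'m" and i j k :: 'm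
  assumes "simplicial_generators e"
    and "i \<noteq> j" "i \<noteq> k" "j \<noteq> k"
    and "e i \<bullet> e j < 0" "e i \<bullet> e k < 0" "e j \<bullet> e k < 0"
  shows "\<not> (\<exists>L. proper_cone L \<and> isotone_projection_set L (gen_cone e))"
proof
  assume "\<exists>L. proper_cone L \<and> isotone_projection_set L (gen_cone e)"
  then obtain L where "proper_cone L" "isotone_projection_set L (gen_cone e)" by blast
  then obtain \<sigma> where \<sigma>: "\<And>a. \<sigma> a \<in> {-1, 1} \<and> \<sigma> a *\<^sub>R e a \<in> L \<and> (\<forall>v\<in>L. 0 \<le> v \<bullet> (\<sigma> a *\<^sub>R e a))"
    using signed_generator_in_cone_and_dual[OF assms(1)] by metis
  have opposite: "\<sigma> a = - \<sigma> b" if "e a \<bullet> e b < 0" for a b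
  proof -
    have "0 \<le> (\<sigma> b *\<^sub>R e b) \<bullet> (\<sigma> a *\<^sub>R e a)" using \<sigma> by blast
    also have "\<dots> = \<sigma> a * \<sigma> b * (e a \<bullet> e b)" by (simp add: inner_commute)
    finally show ?thesis using that \<sigma>[of a] \<sigma>[of b] by auto
  qed
  show False
    using opposite[OF assms(5)] opposite[OF assms(6)] opposite[OF assms(7)] \<sigma>[of k] by auto
qed

end
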